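(* Let $\mathfrak g$ and the infinite quiver $Q(\mathfrak g)$ be as in the context, and let $\mathbb C(\mathbf X)$ be the field of rational functions in the $X$-variables $X^i_n$ ($i\in S$, $n\in d\mathbb Z$) of $Q(\mathfrak g)$ with Poisson bracket $\{X_u,X_v\}=\varepsilon_{uv}X_uX_v$. Let $\mathbb C(s)$ be the field of rational functions in commuting variables $s_i(n)$ ($i\in S$, $n\in d\mathbb Z$) with the log-canonical Poisson bracket determined by: for $n<n'$, $\{s_i(n),s_i(n')\}=s_i(n)s_i(n')$ if $n'-n\in d_i\mathbb Z$; $\{s_i(n),s_j(n')\}=-\tfrac12 s_i(n)s_j(n')$ if $i\neq j$, $B_{ij}\neq0$ and $n'-n\in\min(d_i,d_j)\mathbb Z$; $\{s_i(n),s_j(n)\}=-\tfrac12 s_i(n)s_j(n)$ if $i<j$ and $B_{ij}\ne0$; all remaining brackets of generators being determined by antisymmetry or equal to $0$. Then the field embedding $\sigma:\mathbb C(\mathbf X)\to\mathbb C(s)$, $X^i_n\mapsto s_i(n)/s_i(n+d_i)$, is a Poisson map.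
   Context: Let $\mathfrak g$ be a finite-dimensional complex simple Lie algebra of rank $\ell$, $S=\{1,\dots,\ell\}$, of type $A_\ell$, $B_\ell$, $C_\ell$, $D_\ell$ ($\ell\ge4$), $E_{6,7,8}$, $F_4$ or $G_2$, labelled: $A_\ell,B_\ell,C_\ell$ chain $1-\cdots-\ell$ ($\alpha_\ell$ short in $B_\ell$, long in $C_\ell$); $D_\ell$: chain $1-\cdots-(\ell-1)$ plus edge $(\ell-2)-\ell$; $E_\ell$: chain $1-2-3-5-\cdots-\ell$ plus edge $3-4$; $F_4$: chain $1-2-3-4$, $\alpha_1,\alpha_2$ long; $G_2$: $\alpha_2$ long. $d_i=(\alpha_i,\alpha_i)/2$: $1$ in types $A,D,E$; $(1,\dots,1,\frac12)$ for $B_\ell$; $(1,\dots,1,2)$ for $C_\ell$; $(1,1,\frac12,\frac12)$ for $F_4$; $(1,3)$ for $G_2$; $d=\min d_i$; $C_{ij}=2(\alpha_i,\alpha_j)/(\alpha_i,\alpha_i)$, $B_{ij}=d_iC_{ij}$. Quiver $Q(\mathfrak g)$ on $\{v^i_n: i\in S, n\in d\mathbb Z\}$, arrows for all $n$: (simply-laced) orient Dynkin edges from larger to smaller label ($C(\mathfrak g)$); $v^i_n\to v^i_{n+1}$, and for each $i\to j$ in $C(\mathfrak g)$, $v^i_n\to v^j_n$ and $v^j_{n+1}\to v^i_n$. ($B_\ell$) $v^i_n\to v^i_{n+1}$ ($i\le\ell-1$); $v^i_n\to v^{i-1}_n$, $v^{i-1}_{n+1}\to v^i_n$ ($2\le i\le\ell-1$);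 $v^\ell_n\to v^\ell_{n+1/2}$, $v^\ell_n\to v^{\ell-1}_{n-1/2}$, $v^{\ell-1}_{n+1/2}\to v^\ell_n$. ($C_\ell$) $v^i_n\to v^i_{n+1}$ ($i\le\ell-1$); $v^i_n\to v^{i-1}_n$, $v^{i-1}_{n+1}\to v^i_n$ ($2\le i\le\ell-1$); $v^\ell_n\to v^\ell_{n+2}$, $v^\ell_n\to v^{\ell-1}_n$, $v^{\ell-1}_{n+2}\to v^\ell_n$. ($F_4$) $v^i_n\to v^i_{n+1}$ ($i=1,2$); $v^2_n\to v^1_n$, $v^1_{n+1}\to v^2_n$; $v^3_n\to v^3_{n+1/2}$, $v^3_n\to v^2_{n-1/2}$, $v^2_{n+1/2}\to v^3_n$; $v^4_n\to v^4_{n+1/2}$, $v^4_n\to v^3_n$, $v^3_{n+1/2}\to v^4_n$. ($G_2$) $v^1_n\to v^1_{n+1}$, $v^2_n\to v^2_{n+3}$, $v^2_n\to v^1_n$, $v^1_{n+3}\to v^2_n$. Exchange matrix $\varepsilon_{uv}=\#\{u\to v\}-\#\{v\to u\}$. *)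

theory Defs
  imports Complex_Main "HOL-Library.Poly_Mapping" "HOL-Library.Product_Lexorder"
    "HOL-Computational_Algebra.Fraction_Field"
begin

datatype cartan_type = TA nat | TB nat | TC nat | TD nat | TE nat | TF4 | TG2

definition valid_type :: "cartan_type \<Rightarrow> bool" where
  "valid_type t = (case t of TA l \<Rightarrow> l \<ge> 1 | TB l \<Rightarrow> l \<ge> 2 | TC l \<Rightarrow> l \<ge> 2
     | TD l \<Rightarrow> l \<ge> 4 | TE l \<Rightarrow> l \<in> {6,7,8} | TF4 \<Rightarrow> True | TG2 \<Rightarrow> True)"

definition rank :: "cartan_type \<Rightarrow> nat" where
  "rank t = (case t of TA l \<Rightarrow> l | TB l \<Rightarrow> l | TC l \<Rightarrow> l | TD l \<Rightarrow> l | TE l \<Rightarrow> l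
     | TF4 \<Rightarrow> 4 | TG2 \<Rightarrow> 2)"

definition Sset :: "cartan_type \<Rightarrow> nat set" where
  "Sset t = {1..rank t}"

text \<open>d_i = (alpha_i, alpha_i)/2.\<close>
definition dsym :: "cartan_type \<Rightarrow> nat \<Rightarrow> rat" where
  "dsym t i = (case t of
       TB l \<Rightarrow> (if i = l then 1/2 else 1)
     | TC l \<Rightarrow> (if i = l then 2 else 1)
     | TF4 \<Rightarrow> (if i \<in> {3,4} then 1/2 else 1)
     | TG2 \<Rightarrow> (if i = 2 then 3 else 1)
     | _ \<Rightarrow> 1)"

definition dmin :: "cartan_type \<Rightarrow> rat" where
  "dmin t = Min (dsym t ` Sset t)"

definition dynkin_edge :: "cartan_type \<Rightarrow> nat \<Rightarrow> nat \<Rightarrow> bool" where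
  "dynkin_edge t i j = (i \<in> Sset t \<and> j \<in> Sset t \<and> (case t of
       TD l \<Rightarrow> (j = i + 1 \<and> j \<le> l - 1) \<or> (i = l - 2 \<and> j = l)
     | TE l \<Rightarrow> (i = 1 \<and> j = 2) \<or> (i = 2 \<and> j = 3) \<or> (i = 3 \<and> j = 5) \<or> (i = 3 \<and> j = 4)
               \<or> (5 \<le> i \<and> j = i + 1)
     | _ \<Rightarrow> j = i + 1))"

definition adjacent :: "cartan_type \<Rightarrow> nat \<Rightarrow> nat \<Rightarrow> bool" where
  "adjacent t i j = (dynkin_edge t i j \<or> dynkin_edge t j i)"

text \<open>Cartan matrix C_ij = 2(alpha_i,alpha_j)/(alpha_i,alpha_i), and B_ij = d_i C_ij.\<close>
definition cartanC :: "cartan_type \<Rightarrow> nat \<Rightarrow> nat \<Rightarrow> rat" where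
  "cartanC t i j = (if i = j then 2
     else if adjacent t i j then - (max (dsym t i) (dsym t j) / dsym t i) else 0)"

definition Bsym :: "cartan_type \<Rightarrow> nat \<Rightarrow> nat \<Rightarrow> rat" where
  "Bsym t i j = dsym t i * cartanC t i j"

definition in_mult :: "rat \<Rightarrow> rat \<Rightarrow> bool" where
  "in_mult x a = (\<exists>k::int. x = of_int k * a)"

text \<open>Vertices v^i_n of Q(g) (and indices of s_i(n)): i in S, n in d Z.\<close>
type_synonym vert = "nat \<times> rat"

definition valid_vert :: "cartan_type \<Rightarrow> vert \<Rightarrow> bool" where
  "valid_vert t v = (fst v \<in> Sset t \<and> in_mult (snd v) (dmin t))"

definition arrows :: "cartan_type \<Rightarrow> vert \<Rightarrow> vert \<Rightarrow> int" where
  "arrows t u v = (if valid_vert t u \<and> valid_vert t v then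
     (let i = fst u; n = snd u; j = fst v; m = snd v in
      case t of
        TB l \<Rightarrow>
          of_bool (i = j \<and> i \<le> l - 1 \<and> m = n + 1)
        + of_bool (2 \<le> i \<and> i \<le> l - 1 \<and> j = i - 1 \<and> m = n)
        + of_bool (2 \<le> j \<and> j \<le> l - 1 \<and> i = j - 1 \<and> n = m + 1)
        + of_bool (i = l \<and> j = l \<and> m = n + 1/2)
        + of_bool (i = l \<and> j = l - 1 \<and> m = n - 1/2)
        + of_bool (i = l - 1 \<and> j = l \<and> n = m + 1/2)
      | TC l \<Rightarrow>
          of_bool (i = j \<and> i \<le> l - 1 \<and> m = n + 1)
        + of_bool (2 \<le> i \<and> i \<le> l - 1 \<and> j = i - 1 \<and> m = n)
        + of_bool (2 \<le> j \<and> j \<le> l - 1 \<and> i = j - 1 \<and> n = m + 1)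
        + of_bool (i = l \<and> j = l \<and> m = n + 2)
        + of_bool (i = l \<and> j = l - 1 \<and> m = n)
        + of_bool (i = l - 1 \<and> j = l \<and> n = m + 2)
      | TF4 \<Rightarrow>
          of_bool (i = j \<and> i \<in> {1,2} \<and> m = n + 1)
        + of_bool (i = 2 \<and> j = 1 \<and> m = n)
        + of_bool (i = 1 \<and> j = 2 \<and> n = m + 1)
        + of_bool (i = 3 \<and> j = 3 \<and> m = n + 1/2)
        + of_bool (i = 3 \<and> j = 2 \<and> m = n - 1/2)
        + of_bool (i = 2 \<and> j = 3 \<and> n = m + 1/2)
        + of_bool (i = 4 \<and> j = 4 \<and> m = n + 1/2)
        + of_bool (i = 4 \<and> j = 3 \<and> m = n)
        + of_bool (i = 3 \<and> j = 4 \<and> n = m + 1/2)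
      | TG2 \<Rightarrow>
          of_bool (i = 1 \<and> j = 1 \<and> m = n + 1)
        + of_bool (i = 2 \<and> j = 2 \<and> m = n + 3)
        + of_bool (i = 2 \<and> j = 1 \<and> m = n)
        + of_bool (i = 1 \<and> j = 2 \<and> n = m + 3)
      | _ \<Rightarrow>
          of_bool (i = j \<and> m = n + 1)
        + of_bool (adjacent t i j \<and> j < i \<and> m = n)
        + of_bool (adjacent t i j \<and> i < j \<and> n = m + 1))
   else 0)"

definition exch :: "cartan_type \<Rightarrow> vert \<Rightarrow> vert \<Rightarrow> int" where
  "exch t u v = arrows t u v - arrows t v u"

definition s_omega_lt :: "cartan_type \<Rightarrow> vert \<Rightarrow> vert \<Rightarrow> rat" where
  "s_omega_lt t u v = (let i = fst u; n = snd u; j = fst v; n' = snd v in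
     if i = j then (if in_mult (n' - n) (dsym t i) then 1 else 0)
     else if Bsym t i j \<noteq> 0 \<and> in_mult (n' - n) (min (dsym t i) (dsym t j)) then -1/2 else 0)"

definition s_omega :: "cartan_type \<Rightarrow> vert \<Rightarrow> vert \<Rightarrow> rat" where
  "s_omega t u v = (if valid_vert t u \<and> valid_vert t v then
     (let i = fst u; n = snd u; j = fst v; n' = snd v in
      if n < n' then s_omega_lt t u v
      else if n' < n then - s_omega_lt t v u
      else if i < j \<and> Bsym t i j \<noteq> 0 then -1/2
      else if j < i \<and> Bsym t j i \<noteq> 0 then 1/2
      else 0)
   else 0)"

type_synonym mpoly = "(vert \<Rightarrow>\<^sub>0 nat) \<Rightarrow>\<^sub>0 complex"
type_synonym ratfun = "mpoly fract"

definition mvar :: "vert \<Rightarrow> mpoly" where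
  "mvar v = Poly_Mapping.single (Poly_Mapping.single v 1) 1"

definition mconst :: "complex \<Rightarrow> mpoly" where
  "mconst c = Poly_Mapping.single 0 c"

definition pvars :: "mpoly \<Rightarrow> vert set" where
  "pvars p = (\<Union>m\<in>Poly_Mapping.keys p. Poly_Mapping.keys m)"

definition mpderiv :: "vert \<Rightarrow> mpoly \<Rightarrow> mpoly" where
  "mpderiv v p = (\<Sum>m\<in>Poly_Mapping.keys p.
      Poly_Mapping.single (m - Poly_Mapping.single v 1)
        (Poly_Mapping.lookup p m * of_nat (Poly_Mapping.lookup m v)))"

definition rvar :: "vert \<Rightarrow> ratfun" where
  "rvar v = Fract (mvar v) 1"

definition rconst :: "complex \<Rightarrow> ratfun" where
  "rconst c = Fract (mconst c) 1"

text \<open>Partial derivative of a rational function (quotient rule; independent of the representative).\<close>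
definition rpderiv :: "vert \<Rightarrow> ratfun \<Rightarrow> ratfun" where
  "rpderiv v f = (SOME r. \<exists>a b. b \<noteq> 0 \<and> f = Fract a b \<and>
      r = Fract (mpderiv v a * b - a * mpderiv v b) (b * b))"

definition ratfun_in :: "vert set \<Rightarrow> ratfun \<Rightarrow> bool" where
  "ratfun_in V f = (\<exists>a b. b \<noteq> 0 \<and> f = Fract a b \<and> pvars a \<subseteq> V \<and> pvars b \<subseteq> V)"

text \<open>Log-canonical Poisson bracket with coefficient matrix omega:
  {f,g} = sum_{u,v} omega(u,v) x_u x_v (d f/d x_u) (d g/d x_v),
  the sum taken over a finite set of variables containing all variables of f and g
  (the result does not depend on that choice).\<close>
definition logcan_bracket :: "(vert \<Rightarrow> vert \<Rightarrow> complex) \<Rightarrow> ratfun \<Rightarrow> ratfun \<Rightarrow> ratfun" where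
  "logcan_bracket \<omega> f g = (SOME r. \<exists>V. finite V \<and> ratfun_in V f \<and> ratfun_in V g \<and>
      r = (\<Sum>u\<in>V. \<Sum>v\<in>V. rconst (\<omega> u v) * rvar u * rvar v * rpderiv u f * rpderiv v g))"

definition X_bracket :: "cartan_type \<Rightarrow> ratfun \<Rightarrow> ratfun \<Rightarrow> ratfun" where
  "X_bracket t = logcan_bracket (\<lambda>u v. of_int (exch t u v))"

definition s_bracket :: "cartan_type \<Rightarrow> ratfun \<Rightarrow> ratfun \<Rightarrow> ratfun" where
  "s_bracket t = logcan_bracket (\<lambda>u v. of_rat (s_omega t u v))"

definition sigma_gen :: "cartan_type \<Rightarrow> vert \<Rightarrow> ratfun" where
  "sigma_gen t v = rvar v / rvar (fst v, snd v + dsym t (fst v))"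

definition sigma_poly :: "cartan_type \<Rightarrow> mpoly \<Rightarrow> ratfun" where
  "sigma_poly t p = (\<Sum>m\<in>Poly_Mapping.keys p. rconst (Poly_Mapping.lookup p m) *
      (\<Prod>v\<in>Poly_Mapping.keys m. sigma_gen t v ^ Poly_Mapping.lookup m v))"

definition sigma :: "cartan_type \<Rightarrow> ratfun \<Rightarrow> ratfun" where
  "sigma t f = (SOME r. \<exists>a b. b \<noteq> 0 \<and> f = Fract a b \<and> r = sigma_poly t a / sigma_poly t b)"

end

theory Submission
  imports Defs
begin

(* sigma is a field homomorphism: on polynomials it is a ring homomorphism, and it maps nonzero
   polynomials to nonzero rational functions because the substitution X(i,n) |-> s(i,n) / s(i,n+d_i)
   is triangular with respect to n.  By the chain rule,
     s_w * d sigma(X_u) / d s_w = sigma(X_u) * ([w = u] - [w = u+]),   where (i,n)+ = (i, n + d_i),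
   so sigma pulls the log-canonical bracket with coefficients omega back to the log-canonical bracket
   with coefficients omega(u,v) - omega(u,v+) - omega(u+,v) + omega(u+,v+).  The proposition is thus
   the identity eps(u,v) = that mixed difference of the coefficients of the s-bracket, for all vertices
   u, v of Q(g).  Measured in units of d, the arrows of Q(g) have a description that is uniform in the
   type, in terms of the ratios d_i / d in {1,2,3}, adjacency and the order of the labels.  When the
   offset between u and v exceeds 3 units both sides of the identity vanish, the left one by
   periodicity, and the remaining cases form a finite check. *)

section \<open>Partial derivatives\<close>

lemma poly_mapping_sum_single:
  fixes p :: "'a \<Rightarrow>\<^sub>0 'b::comm_monoid_add"
  assumes "finite A" "Poly_Mapping.keys p \<subseteq> A"
  shows "p = (\<Sum>m\<in>A. Poly_Mapping.single m (Poly_Mapping.lookup p m))"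
  by (rule poly_mapping_eqI)
    (use assms in \<open>auto simp: lookup_sum lookup_single when_def in_keys_iff\<close>)

lemma mpderiv_eq_sum:
  assumes "finite A" "Poly_Mapping.keys p \<subseteq> A"
  shows "mpderiv v p = (\<Sum>m\<in>A. Poly_Mapping.single (m - Poly_Mapping.single v 1)
    (Poly_Mapping.lookup p m * of_nat (Poly_Mapping.lookup m v)))"
  unfolding mpderiv_def using assms by (intro sum.mono_neutral_left) (auto simp: in_keys_iff)

lemma mpderiv_single:
  "mpderiv v (Poly_Mapping.single m c) =
    Poly_Mapping.single (m - Poly_Mapping.single v 1) (c * of_nat (Poly_Mapping.lookup m v))"
  by (subst mpderiv_eq_sum[of "{m}"]) auto

lemma mpderiv_zero [simp]: "mpderiv v 0 = 0"
  by (simp add: mpderiv_def)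

lemma mpderiv_one [simp]: "mpderiv v 1 = 0"
  using mpderiv_single[of v 0 1] by simp

lemma mpderiv_add: "mpderiv v (p + q) = mpderiv v p + mpderiv v q"
proof -
  let ?A = "Poly_Mapping.keys p \<union> Poly_Mapping.keys q"
  have "Poly_Mapping.keys (p + q) \<subseteq> ?A" by (rule keys_add)
  then show ?thesis
    by (simp add: mpderiv_eq_sum[of ?A] lookup_add distrib_right single_add sum.distrib)
qed

lemma mpderiv_sum: "mpderiv v (sum g A) = (\<Sum>a\<in>A. mpderiv v (g a))"
  by (induction A rule: infinite_finite_induct) (simp_all add: mpderiv_add)

lemma mpderiv_mult_single:
  "mpderiv v (Poly_Mapping.single a c * Poly_Mapping.single b d) =
    mpderiv v (Poly_Mapping.single a c) * Poly_Mapping.single b d +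
    Poly_Mapping.single a c * mpderiv v (Poly_Mapping.single b d)"
proof -
  let ?e = "Poly_Mapping.single v (1::nat)"
  have "Poly_Mapping.lookup a v \<noteq> 0 \<Longrightarrow> a + b - ?e = a - ?e + b"
    and "Poly_Mapping.lookup b v \<noteq> 0 \<Longrightarrow> a + b - ?e = a + (b - ?e)"
    by (auto intro!: poly_mapping_eqI simp: lookup_add lookup_minus lookup_single when_def)
  then show ?thesis
    by (cases "Poly_Mapping.lookup a v = 0"; cases "Poly_Mapping.lookup b v = 0")
      (simp_all add: mult_single mpderiv_single lookup_add distrib_left single_add ac_simps)
qed

lemma mpderiv_mult: "mpderiv v (p * q) = mpderiv v p * q + p * mpderiv v q"
proof -
  let ?S = "\<lambda>p a. Poly_Mapping.single a (Poly_Mapping.lookup p a)"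
  have p: "p = (\<Sum>a\<in>Poly_Mapping.keys p. ?S p a)" and q: "q = (\<Sum>b\<in>Poly_Mapping.keys q. ?S q b)"
    by (simp_all add: poly_mapping_sum_single)
  have "mpderiv v (p * q) =
      (\<Sum>a\<in>Poly_Mapping.keys p. \<Sum>b\<in>Poly_Mapping.keys q. mpderiv v (?S p a * ?S q b))"
    by (subst (1) p, subst (1) q) (simp only: sum_product mpderiv_sum)
  also have "\<dots> = (\<Sum>a\<in>Poly_Mapping.keys p. mpderiv v (?S p a)) * (\<Sum>b\<in>Poly_Mapping.keys q. ?S q b)
      + (\<Sum>a\<in>Poly_Mapping.keys p. ?S p a) * (\<Sum>b\<in>Poly_Mapping.keys q. mpderiv v (?S q b))"
    by (simp add: mpderiv_mult_single sum.distrib sum_product)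
  finally show ?thesis
    by (simp flip: p q mpderiv_sum)
qed

lemma some_Fract_representative:
  assumes "b \<noteq> 0" "\<And>c d. d \<noteq> 0 \<Longrightarrow> Fract a b = Fract c d \<Longrightarrow> F c d = F a b"
  shows "(SOME r. \<exists>c d. d \<noteq> 0 \<and> Fract a b = Fract c d \<and> r = F c d) = F a b"
proof (rule someI2)
  show "\<exists>c d. d \<noteq> 0 \<and> Fract a b = Fract c d \<and> F a b = F c d"
    using assms(1) by blast
qed (use assms(2) in fastforce)

lemma rpderiv_Fract:
  assumes "b \<noteq> 0"
  shows "rpderiv v (Fract a b) = Fract (mpderiv v a * b - a * mpderiv v b) (b * b)"
  unfolding rpderiv_def
proof (rule some_Fract_representative[OF assms])
  fix c d assume "d \<noteq> 0" "Fract a b = Fract c d"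
  then have ad: "a * d = c * b" using assms by (simp add: eq_fract)
  then have "mpderiv v a * d + a * mpderiv v d = mpderiv v c * b + c * mpderiv v b"
    by (metis mpderiv_mult)
  with ad have "(mpderiv v c * d - c * mpderiv v d) * (b * b) =
      (mpderiv v a * b - a * mpderiv v b) * (d * d)"
    by algebra
  with \<open>d \<noteq> 0\<close> show "Fract (mpderiv v c * d - c * mpderiv v d) (d * d) =
      Fract (mpderiv v a * b - a * mpderiv v b) (b * b)"
    using assms by (simp add: eq_fract)
qed

lemma rpderiv_Fract_one: "rpderiv v (Fract a 1) = Fract (mpderiv v a) 1"
  by (simp add: rpderiv_Fract)

lemma rpderiv_add: "rpderiv v (x + y) = rpderiv v x + rpderiv v y"
  by (cases x; cases y) (simp add: rpderiv_Fract eq_fract mpderiv_mult mpderiv_add algebra_simps)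

lemma rpderiv_mult: "rpderiv v (x * y) = rpderiv v x * y + x * rpderiv v y"
  by (cases x; cases y) (simp add: rpderiv_Fract eq_fract mpderiv_mult algebra_simps)

lemma rpderiv_zero [simp]: "rpderiv v 0 = 0"
  using rpderiv_Fract_one[of v 0] by (simp add: fract_collapse)

lemma rpderiv_one [simp]: "rpderiv v 1 = 0"
  using rpderiv_Fract_one[of v 1] by (simp add: fract_collapse)

lemma rpderiv_sum: "rpderiv v (sum g A) = (\<Sum>a\<in>A. rpderiv v (g a))"
  by (induction A rule: infinite_finite_induct) (simp_all add: rpderiv_add)

lemma rpderiv_prod: "rpderiv v (prod g A) = (\<Sum>a\<in>A. rpderiv v (g a) * prod g (A - {a}))"
proof (induction A rule: infinite_finite_induct)
  case (insert x F)
  have "(\<Sum>a\<in>F. rpderiv v (g a) * prod g (insert x F - {a}))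
      = g x * (\<Sum>a\<in>F. rpderiv v (g a) * prod g (F - {a}))"
    using insert by (auto simp: sum_distrib_left insert_Diff_if intro!: sum.cong)
  with insert show ?case
    by (simp add: rpderiv_mult)
qed auto

lemma rpderiv_power: "rpderiv v (x ^ n) = of_nat n * x ^ (n - 1) * rpderiv v x"
proof (induction n)
  case (Suc n)
  then show ?case by (cases n) (simp_all add: rpderiv_mult algebra_simps)
qed simp

lemma rpderiv_divide: "rpderiv v (x / y) = (rpderiv v x * y - x * rpderiv v y) / (y * y)"
proof (cases "y = 0")
  case False
  then have "rpderiv v x = rpderiv v (x / y) * y + x / y * rpderiv v y"
    using rpderiv_mult[of v "x / y" y] by simp
  with False show ?thesis
    by (simp add: divide_simps)
qed simp

lemma rpderiv_rvar: "rpderiv w (rvar v) = of_bool (w = v)"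
  by (simp add: rvar_def rpderiv_Fract_one mvar_def mpderiv_single lookup_single fract_collapse)

lemma rpderiv_rconst: "rpderiv w (rconst c) = 0"
  by (simp add: rconst_def rpderiv_Fract_one mconst_def mpderiv_single fract_collapse)

section \<open>Variables of a rational function and the log-canonical bracket\<close>

lemma finite_pvars: "finite (pvars p)"
  by (simp add: pvars_def)

lemma keys_subset_pvars: "m \<in> Poly_Mapping.keys p \<Longrightarrow> Poly_Mapping.keys m \<subseteq> pvars p"
  by (auto simp: pvars_def)

lemma pvars_add: "pvars (p + q) \<subseteq> pvars p \<union> pvars q"
  unfolding pvars_def using keys_add[of p q] by blast

lemma pvars_mult: "pvars (p * q) \<subseteq> pvars p \<union> pvars q"
proof -
  have "Poly_Mapping.keys (a + b) \<subseteq> Poly_Mapping.keys a \<union> Poly_Mapping.keys b"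
    for a b :: "vert \<Rightarrow>\<^sub>0 nat"
    by (auto simp: in_keys_iff lookup_add)
  with keys_mult[of p q] show ?thesis
    unfolding pvars_def by fastforce
qed

lemma mpderiv_eq_0_if_notin_pvars: "u \<notin> pvars p \<Longrightarrow> mpderiv u p = 0"
  unfolding mpderiv_def pvars_def by (auto simp: in_keys_iff intro!: sum.neutral)

lemma ratfun_in_Fract: "b \<noteq> 0 \<Longrightarrow> pvars a \<subseteq> V \<Longrightarrow> pvars b \<subseteq> V \<Longrightarrow> ratfun_in V (Fract a b)"
  unfolding ratfun_in_def by blast

lemma ratfun_inE:
  assumes "ratfun_in V f"
  obtains a b where "b \<noteq> 0" "f = Fract a b" "pvars a \<subseteq> V" "pvars b \<subseteq> V"
  using assms unfolding ratfun_in_def by blast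

lemma ratfun_in_UNIV: "ratfun_in UNIV f"
  by (cases f) (auto intro: ratfun_in_Fract)

lemma ratfun_in_finite_subset:
  assumes "ratfun_in A f" "ratfun_in A g"
  obtains V where "finite V" "V \<subseteq> A" "ratfun_in V f" "ratfun_in V g"
proof -
  obtain a b c d where "b \<noteq> 0" "f = Fract a b" "pvars a \<subseteq> A" "pvars b \<subseteq> A"
    and "d \<noteq> 0" "g = Fract c d" "pvars c \<subseteq> A" "pvars d \<subseteq> A"
    using assms by (elim ratfun_inE)
  then show ?thesis
    by (intro that[of "pvars a \<union> pvars b \<union> pvars c \<union> pvars d"])
      (auto simp: finite_pvars intro: ratfun_in_Fract)
qed

lemma rpderiv_eq_0_if_notin:
  assumes "ratfun_in V f" "u \<notin> V"
  shows "rpderiv u f = 0"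
proof -
  obtain a b where "b \<noteq> 0" "f = Fract a b" "pvars a \<subseteq> V" "pvars b \<subseteq> V"
    using assms(1) by (rule ratfun_inE)
  moreover from this assms(2) have "mpderiv u a = 0" "mpderiv u b = 0"
    by (auto intro!: mpderiv_eq_0_if_notin_pvars)
  ultimately show ?thesis
    by (simp add: rpderiv_Fract fract_collapse)
qed

lemma ratfun_in_rvar: "v \<in> V \<Longrightarrow> ratfun_in V (rvar v)"
  unfolding rvar_def by (rule ratfun_in_Fract) (auto simp: mvar_def pvars_def)

lemma ratfun_in_rconst: "ratfun_in V (rconst c)"
  unfolding rconst_def by (rule ratfun_in_Fract) (auto simp: mconst_def pvars_def)

lemma ratfun_in_zero: "ratfun_in V 0"
  using ratfun_in_Fract[of 1 0 V] by (simp add: pvars_def fract_collapse)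

lemma ratfun_in_one: "ratfun_in V 1"
  using ratfun_in_Fract[of 1 1 V] by (simp add: pvars_def fract_collapse)

lemma ratfun_in_add:
  assumes "ratfun_in V f" "ratfun_in V g"
  shows "ratfun_in V (f + g)"
proof -
  obtain a b c d where "b \<noteq> 0" "f = Fract a b" "pvars a \<subseteq> V" "pvars b \<subseteq> V"
    and "d \<noteq> 0" "g = Fract c d" "pvars c \<subseteq> V" "pvars d \<subseteq> V"
    using assms by (elim ratfun_inE)
  moreover have "pvars (a * d + c * b) \<subseteq> pvars a \<union> pvars b \<union> pvars c \<union> pvars d"
    using pvars_add[of "a * d" "c * b"] pvars_mult[of a d] pvars_mult[of c b] by blast
  ultimately show ?thesis
    using pvars_mult[of b d] by (auto intro!: ratfun_in_Fract)
qed

lemma ratfun_in_mult: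
  assumes "ratfun_in V f" "ratfun_in V g"
  shows "ratfun_in V (f * g)"
proof -
  obtain a b c d where "b \<noteq> 0" "f = Fract a b" "pvars a \<subseteq> V" "pvars b \<subseteq> V"
    and "d \<noteq> 0" "g = Fract c d" "pvars c \<subseteq> V" "pvars d \<subseteq> V"
    using assms by (elim ratfun_inE)
  then show ?thesis
    using pvars_mult[of a c] pvars_mult[of b d] by (auto intro!: ratfun_in_Fract)
qed

lemma ratfun_in_inverse:
  assumes "ratfun_in V f"
  shows "ratfun_in V (inverse f)"
proof -
  obtain a b where "b \<noteq> 0" "f = Fract a b" "pvars a \<subseteq> V" "pvars b \<subseteq> V"
    using assms by (rule ratfun_inE)
  then show ?thesis
    by (cases "a = 0") (auto simp: fract_collapse intro: ratfun_in_Fract ratfun_in_zero)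
qed

lemma ratfun_in_divide: "ratfun_in V f \<Longrightarrow> ratfun_in V g \<Longrightarrow> ratfun_in V (f / g)"
  by (simp add: divide_inverse ratfun_in_mult ratfun_in_inverse)

lemma ratfun_in_sum: "(\<And>a. a \<in> A \<Longrightarrow> ratfun_in V (g a)) \<Longrightarrow> ratfun_in V (sum g A)"
  by (induction A rule: infinite_finite_induct) (auto simp: ratfun_in_add ratfun_in_zero)

lemma ratfun_in_prod: "(\<And>a. a \<in> A \<Longrightarrow> ratfun_in V (g a)) \<Longrightarrow> ratfun_in V (prod g A)"
  by (induction A rule: infinite_finite_induct) (auto simp: ratfun_in_mult ratfun_in_one)

lemma ratfun_in_power: "ratfun_in V f \<Longrightarrow> ratfun_in V (f ^ n)"
  by (induction n) (auto simp: ratfun_in_mult ratfun_in_one)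

definition logcan_sum :: "(vert \<Rightarrow> vert \<Rightarrow> complex) \<Rightarrow> vert set \<Rightarrow> ratfun \<Rightarrow> ratfun \<Rightarrow> ratfun" where
  "logcan_sum \<omega> V f g =
    (\<Sum>u\<in>V. \<Sum>v\<in>V. rconst (\<omega> u v) * rvar u * rvar v * rpderiv u f * rpderiv v g)"

lemma logcan_sum_superset:
  assumes "finite U" "V \<subseteq> U" "ratfun_in V f" "ratfun_in V g"
  shows "logcan_sum \<omega> U f g = logcan_sum \<omega> V f g"
proof -
  have "logcan_sum \<omega> U f g =
      (\<Sum>u\<in>U. \<Sum>v\<in>V. rconst (\<omega> u v) * rvar u * rvar v * rpderiv u f * rpderiv v g)"
    unfolding logcan_sum_def using assms rpderiv_eq_0_if_notin[OF assms(4)]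
    by (intro sum.cong sum.mono_neutral_right) auto
  also have "\<dots> = logcan_sum \<omega> V f g"
    unfolding logcan_sum_def using assms rpderiv_eq_0_if_notin[OF assms(3)]
    by (intro sum.mono_neutral_right) auto
  finally show ?thesis .
qed

lemma logcan_bracket_eq_sum:
  assumes "finite V" "ratfun_in V f" "ratfun_in V g"
  shows "logcan_bracket \<omega> f g = logcan_sum \<omega> V f g"
  unfolding logcan_bracket_def logcan_sum_def[symmetric]
proof (rule someI2)
  show "\<exists>W. finite W \<and> ratfun_in W f \<and> ratfun_in W g \<and> logcan_sum \<omega> V f g = logcan_sum \<omega> W f g"
    using assms by blast
next
  fix r assume "\<exists>W. finite W \<and> ratfun_in W f \<and> ratfun_in W g \<and> r = logcan_sum \<omega> W f g"
  then obtain W where W: "finite W" "ratfun_in W f" "ratfun_in W g" "r = logcan_sum \<omega> W f g"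
    by blast
  have "logcan_sum \<omega> W f g = logcan_sum \<omega> (V \<union> W) f g"
    using assms W by (intro logcan_sum_superset[symmetric]) auto
  also have "\<dots> = logcan_sum \<omega> V f g"
    using assms W by (intro logcan_sum_superset) auto
  finally show "r = logcan_sum \<omega> V f g" using W(4) by simp
qed

lemma logcan_bracket_cong:
  assumes "ratfun_in A f" "ratfun_in A g" "\<And>u v. u \<in> A \<Longrightarrow> v \<in> A \<Longrightarrow> \<omega> u v = \<omega>' u v"
  shows "logcan_bracket \<omega> f g = logcan_bracket \<omega>' f g"
proof -
  obtain V where V: "finite V" "ratfun_in V f" "ratfun_in V g" and "V \<subseteq> A"
    using assms(1,2) by (rule ratfun_in_finite_subset)
  then have "u \<in> V \<Longrightarrow> v \<in> V \<Longrightarrow> \<omega> u v = \<omega>' u v" for u v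
    using assms(3) by blast
  then have "logcan_sum \<omega> V f g = logcan_sum \<omega>' V f g"
    unfolding logcan_sum_def by (intro sum.cong refl) simp
  then show ?thesis
    by (simp only: logcan_bracket_eq_sum[OF V])
qed

section \<open>The field embedding sigma\<close>

lemma dsym_pos: "dsym t i > 0"
  by (cases t) (auto simp: dsym_def)

definition vshift :: "cartan_type \<Rightarrow> vert \<Rightarrow> vert" where
  "vshift t v = (fst v, snd v + dsym t (fst v))"

lemma sigma_gen_eq: "sigma_gen t v = rvar v / rvar (vshift t v)"
  by (simp add: sigma_gen_def vshift_def)

lemma snd_vshift_gt: "snd v < snd (vshift t v)"
  using dsym_pos[of t "fst v"] by (simp add: vshift_def)

lemma vshift_neq: "vshift t v \<noteq> v"
  using snd_vshift_gt[of v t] by auto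

lemma rconst_add: "rconst (a + b) = rconst a + rconst b"
  by (simp add: rconst_def mconst_def single_add)

lemma rconst_diff: "rconst (a - b) = rconst a - rconst b"
  by (simp add: rconst_def mconst_def single_diff)

lemma rconst_mult: "rconst (a * b) = rconst a * rconst b"
  by (simp add: rconst_def mconst_def mult_single)

lemma rconst_of_nat: "rconst (of_nat n) = of_nat n"
  by (simp add: rconst_def mconst_def of_nat_fract flip: of_nat_single)

lemma rvar_nonzero: "rvar v \<noteq> 0"
proof -
  have "mvar v \<noteq> 0"
    by (metis mvar_def lookup_single_eq lookup_zero zero_neq_one)
  then show ?thesis
    by (simp add: rvar_def Zero_fract_def eq_fract del: fract_collapse)
qed

lemma rvar_power: "rvar v ^ k = Fract (Poly_Mapping.single (Poly_Mapping.single v k) 1) 1"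
  by (induction k)
    (simp_all add: rvar_def mvar_def mult_single add.commute fract_collapse flip: single_add)

definition sigma_monomial :: "cartan_type \<Rightarrow> (vert \<Rightarrow>\<^sub>0 nat) \<Rightarrow> ratfun" where
  "sigma_monomial t m = (\<Prod>v\<in>Poly_Mapping.keys m. sigma_gen t v ^ Poly_Mapping.lookup m v)"

lemma sigma_monomial_eq_prod:
  assumes "finite A" "Poly_Mapping.keys m \<subseteq> A"
  shows "sigma_monomial t m = (\<Prod>v\<in>A. sigma_gen t v ^ Poly_Mapping.lookup m v)"
  unfolding sigma_monomial_def using assms
  by (intro prod.mono_neutral_left) (auto simp: in_keys_iff)

lemma sigma_monomial_add: "sigma_monomial t (m + m') = sigma_monomial t m * sigma_monomial t m'"
proof -
  let ?A = "Poly_Mapping.keys m \<union> Poly_Mapping.keys m'"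
  have "Poly_Mapping.keys (m + m') \<subseteq> ?A"
    by (auto simp: in_keys_iff lookup_add)
  then show ?thesis
    by (simp add: sigma_monomial_eq_prod[of ?A] lookup_add power_add prod.distrib)
qed

lemma sigma_poly_eq_sum:
  assumes "finite A" "Poly_Mapping.keys p \<subseteq> A"
  shows "sigma_poly t p = (\<Sum>m\<in>A. rconst (Poly_Mapping.lookup p m) * sigma_monomial t m)"
  unfolding sigma_poly_def sigma_monomial_def[symmetric] using assms
  by (intro sum.mono_neutral_left) (auto simp: in_keys_iff rconst_def mconst_def fract_collapse)

lemma sigma_poly_single: "sigma_poly t (Poly_Mapping.single m c) = rconst c * sigma_monomial t m"
  by (subst sigma_poly_eq_sum[of "{m}"]) auto

lemma sigma_poly_zero [simp]: "sigma_poly t 0 = 0"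
  by (simp add: sigma_poly_def)

lemma sigma_poly_one [simp]: "sigma_poly t 1 = 1"
  using sigma_poly_single[of t 0 1]
  by (simp add: sigma_monomial_def rconst_def mconst_def fract_collapse)

lemma sigma_poly_add: "sigma_poly t (p + q) = sigma_poly t p + sigma_poly t q"
proof -
  let ?A = "Poly_Mapping.keys p \<union> Poly_Mapping.keys q"
  have "Poly_Mapping.keys (p + q) \<subseteq> ?A" by (rule keys_add)
  then show ?thesis
    by (simp add: sigma_poly_eq_sum[of ?A] lookup_add rconst_add distrib_right sum.distrib)
qed

lemma sigma_poly_sum: "sigma_poly t (sum g A) = (\<Sum>a\<in>A. sigma_poly t (g a))"
  by (induction A rule: infinite_finite_induct) (simp_all add: sigma_poly_add)

lemma sigma_poly_diff: "sigma_poly t (p - q) = sigma_poly t p - sigma_poly t q"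
  by (metis add_diff_cancel diff_add_cancel sigma_poly_add)

lemma sigma_poly_mult: "sigma_poly t (p * q) = sigma_poly t p * sigma_poly t q"
proof -
  let ?S = "\<lambda>p a. Poly_Mapping.single a (Poly_Mapping.lookup p a)"
  have p: "p = (\<Sum>a\<in>Poly_Mapping.keys p. ?S p a)" and q: "q = (\<Sum>b\<in>Poly_Mapping.keys q. ?S q b)"
    by (simp_all add: poly_mapping_sum_single)
  have "sigma_poly t (p * q) = (\<Sum>a\<in>Poly_Mapping.keys p. \<Sum>b\<in>Poly_Mapping.keys q.
      sigma_poly t (?S p a) * sigma_poly t (?S q b))"
    by (subst (1) p, subst (1) q) (simp add: sum_product sigma_poly_sum mult_single
        sigma_poly_single rconst_mult sigma_monomial_add mult_ac)
  also have "\<dots> = sigma_poly t p * sigma_poly t q"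
    by (subst (3) p, subst (3) q) (simp add: sigma_poly_sum sum_product)
  finally show ?thesis .
qed

lemma sigma_poly_mvar: "sigma_poly t (mvar v) = sigma_gen t v"
  by (simp add: mvar_def sigma_poly_single sigma_monomial_def rconst_def mconst_def fract_collapse)

lemma sigma_poly_mconst: "sigma_poly t (mconst c) = rconst c"
  by (simp add: mconst_def sigma_poly_single sigma_monomial_def)

(* The exponent vector of sigma(x^m) * prod_{v in V} x_{s v}^N for the substitution
   x_v |-> x_v / x_{s v}; N is chosen so large that no exponent is negative. *)
definition cleared_monomial :: "('a \<Rightarrow> 'a) \<Rightarrow> nat \<Rightarrow> 'a set \<Rightarrow> ('a \<Rightarrow>\<^sub>0 nat) \<Rightarrow> 'a \<Rightarrow>\<^sub>0 nat" where
  "cleared_monomial s N V m = (\<Sum>v\<in>V. Poly_Mapping.single v (Poly_Mapping.lookup m v)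
    + Poly_Mapping.single (s v) (N - Poly_Mapping.lookup m v))"

lemma cleared_monomial_inj:
  fixes h :: "'a \<Rightarrow> 'b::linorder"
  assumes "\<And>v. h v < h (s v)" "finite V"
    and "Poly_Mapping.keys m \<subseteq> V" "Poly_Mapping.keys m' \<subseteq> V"
    and "cleared_monomial s N V m = cleared_monomial s N V m'"
  shows "m = m'"
proof (rule ccontr)
  assume "m \<noteq> m'"
  define D where "D = {v \<in> V. Poly_Mapping.lookup m v \<noteq> Poly_Mapping.lookup m' v}"
  obtain v where "Poly_Mapping.lookup m v \<noteq> Poly_Mapping.lookup m' v"
    using \<open>m \<noteq> m'\<close> by (metis poly_mapping_eqI)
  moreover from this have "v \<in> V"
    using assms(3,4) by (metis in_keys_iff subsetD)
  ultimately have "D \<noteq> {}" by (auto simp: D_def)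
  moreover have "finite D" using assms(2) by (simp add: D_def)
  ultimately obtain w where w: "w \<in> D" and min: "\<And>v. v \<in> D \<Longrightarrow> h w \<le> h v"
    by (metis ex_is_arg_min_if_finite is_arg_min_linorder)
  then have "w \<in> V" by (simp add: D_def)
  have lookup_w: "Poly_Mapping.lookup (cleared_monomial s N V n) w = Poly_Mapping.lookup n w
      + (\<Sum>v\<in>V. (N - Poly_Mapping.lookup n v) when s v = w)" for n
  proof -
    have "(\<Sum>v\<in>V. Poly_Mapping.lookup n v when v = w) = Poly_Mapping.lookup n w"
      using \<open>w \<in> V\<close> assms(2) by (simp add: when_def)
    then show ?thesis
      by (simp add: cleared_monomial_def lookup_sum lookup_add lookup_single sum.distrib)
  qed
  \<comment> \<open>the exponents feeding into \<open>w\<close> from below agree, since \<open>w\<close> has minimal height in \<open>D\<close>\<close>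
  have "(\<Sum>v\<in>V. (N - Poly_Mapping.lookup m v) when s v = w) =
      (\<Sum>v\<in>V. (N - Poly_Mapping.lookup m' v) when s v = w)"
  proof (intro sum.cong refl)
    fix v assume "v \<in> V"
    have "Poly_Mapping.lookup m v = Poly_Mapping.lookup m' v" if "s v = w"
      using min[of v] assms(1)[of v] that \<open>v \<in> V\<close> by (force simp: D_def)
    then show "((N - Poly_Mapping.lookup m v) when s v = w) =
        ((N - Poly_Mapping.lookup m' v) when s v = w)"
      by (simp add: when_def)
  qed
  then have "Poly_Mapping.lookup m w = Poly_Mapping.lookup m' w"
    using lookup_w[of m] lookup_w[of m'] assms(5) by simp
  with w show False by (simp add: D_def)
qed

lemma Fract_one_sum: "Fract (sum g A) (1::'a::idom) = (\<Sum>a\<in>A. Fract (g a) 1)"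
proof (induction A rule: infinite_finite_induct)
  case (insert x F)
  then show ?case by (simp flip: insert.IH)
qed (simp_all add: fract_collapse)

lemma prod_Fract_single:
  "(\<Prod>x\<in>A. Fract (Poly_Mapping.single (E x) (1::complex)) (1::mpoly)) =
    Fract (Poly_Mapping.single (\<Sum>x\<in>A. E x) 1) 1"
  by (induction A rule: infinite_finite_induct) (simp_all add: mult_single fract_collapse)

lemma sigma_monomial_clear_denominators:
  assumes "finite V" "Poly_Mapping.keys m \<subseteq> V" "\<And>v. v \<in> V \<Longrightarrow> Poly_Mapping.lookup m v \<le> N"
  shows "sigma_monomial t m * (\<Prod>v\<in>V. rvar (vshift t v) ^ N) =
    Fract (Poly_Mapping.single (cleared_monomial (vshift t) N V m) 1) 1"
proof -
  have "sigma_gen t v ^ Poly_Mapping.lookup m v * rvar (vshift t v) ^ N =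
      rvar v ^ Poly_Mapping.lookup m v * rvar (vshift t v) ^ (N - Poly_Mapping.lookup m v)"
    if "v \<in> V" for v
    using assms(3)[OF that] rvar_nonzero[of "vshift t v"]
    by (simp add: sigma_gen_eq power_divide field_simps flip: power_add)
  then have "sigma_monomial t m * (\<Prod>v\<in>V. rvar (vshift t v) ^ N) =
      (\<Prod>v\<in>V. Fract (Poly_Mapping.single (Poly_Mapping.single v (Poly_Mapping.lookup m v)
        + Poly_Mapping.single (vshift t v) (N - Poly_Mapping.lookup m v)) 1) 1)"
    by (simp add: sigma_monomial_eq_prod[OF assms(1,2)] rvar_power mult_single
        flip: prod.distrib cong: prod.cong)
  then show ?thesis
    by (simp add: prod_Fract_single cleared_monomial_def)
qed

lemma sigma_poly_clear_denominators:
  assumes "finite V" "pvars p \<subseteq> V"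
    and "\<And>m v. m \<in> Poly_Mapping.keys p \<Longrightarrow> v \<in> V \<Longrightarrow> Poly_Mapping.lookup m v \<le> N"
  shows "sigma_poly t p * (\<Prod>v\<in>V. rvar (vshift t v) ^ N) =
    Fract (\<Sum>m\<in>Poly_Mapping.keys p.
      Poly_Mapping.single (cleared_monomial (vshift t) N V m) (Poly_Mapping.lookup p m)) 1"
proof -
  have "sigma_poly t p * (\<Prod>v\<in>V. rvar (vshift t v) ^ N) = (\<Sum>m\<in>Poly_Mapping.keys p.
      rconst (Poly_Mapping.lookup p m) * (sigma_monomial t m * (\<Prod>v\<in>V. rvar (vshift t v) ^ N)))"
    by (simp add: sigma_poly_eq_sum[of "Poly_Mapping.keys p"] sum_distrib_right mult.assoc)
  also have "\<dots> = (\<Sum>m\<in>Poly_Mapping.keys p.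
      Fract (Poly_Mapping.single (cleared_monomial (vshift t) N V m) (Poly_Mapping.lookup p m)) 1)"
  proof (intro sum.cong refl)
    fix m assume "m \<in> Poly_Mapping.keys p"
    then have "Poly_Mapping.keys m \<subseteq> V" "\<And>v. v \<in> V \<Longrightarrow> Poly_Mapping.lookup m v \<le> N"
      using assms keys_subset_pvars by blast+
    then show "rconst (Poly_Mapping.lookup p m) * (sigma_monomial t m * (\<Prod>v\<in>V. rvar (vshift t v) ^ N))
      = Fract (Poly_Mapping.single (cleared_monomial (vshift t) N V m) (Poly_Mapping.lookup p m)) 1"
      by (simp add: sigma_monomial_clear_denominators[OF assms(1)] rconst_def mconst_def mult_single)
  qed
  finally show ?thesis
    by (simp add: Fract_one_sum)
qed

lemma sigma_poly_nonzero:
  assumes "p \<noteq> 0"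
  shows "sigma_poly t p \<noteq> 0"
proof -
  define K where "K = Poly_Mapping.keys p"
  define V where "V = pvars p"
  obtain N where N: "\<And>m v. m \<in> K \<Longrightarrow> v \<in> V \<Longrightarrow> Poly_Mapping.lookup m v \<le> N"
    using finite_nat_set_iff_bounded_le[of "(\<lambda>(m, v). Poly_Mapping.lookup m v) ` (K \<times> V)"]
    by (auto simp: K_def V_def finite_pvars)
  define E where "E = cleared_monomial (vshift t) N V"
  define Q where "Q = (\<Sum>m\<in>K. Poly_Mapping.single (E m) (Poly_Mapping.lookup p m))"
  have E_inj: "m = m'" if "m \<in> K" "m' \<in> K" "E m = E m'" for m m'
  proof (rule cleared_monomial_inj[where h = snd])
    show "snd v < snd (vshift t v)" for v by (rule snd_vshift_gt)
  qed (use that in \<open>simp_all add: E_def K_def V_def finite_pvars keys_subset_pvars\<close>)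
  obtain m0 where "m0 \<in> K"
    using assms by (metis K_def all_not_in_conv keys_eq_empty)
  have "Poly_Mapping.lookup Q (E m0) = (\<Sum>m\<in>K. if m = m0 then Poly_Mapping.lookup p m else 0)"
    unfolding Q_def lookup_sum lookup_single
    using E_inj \<open>m0 \<in> K\<close> by (intro sum.cong refl) (auto simp: when_def)
  also have "\<dots> \<noteq> 0"
    using \<open>m0 \<in> K\<close> by (simp add: K_def in_keys_iff)
  finally have "Fract Q 1 \<noteq> 0"
    by (auto simp: Zero_fract_def eq_fract simp del: fract_collapse)
  moreover have "sigma_poly t p * (\<Prod>v\<in>V. rvar (vshift t v) ^ N) = Fract Q 1"
    unfolding Q_def E_def K_def using N
    by (intro sigma_poly_clear_denominators) (auto simp: V_def K_def finite_pvars)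
  ultimately show ?thesis by auto
qed

lemma sigma_Fract:
  assumes "b \<noteq> 0"
  shows "sigma t (Fract a b) = sigma_poly t a / sigma_poly t b"
  unfolding sigma_def
proof (rule some_Fract_representative[OF assms])
  fix c d assume "d \<noteq> 0" "Fract a b = Fract c d"
  then have "sigma_poly t a * sigma_poly t d = sigma_poly t c * sigma_poly t b"
    using assms by (metis eq_fract(1) sigma_poly_mult)
  with \<open>d \<noteq> 0\<close> show "sigma_poly t c / sigma_poly t d = sigma_poly t a / sigma_poly t b"
    using sigma_poly_nonzero assms by (simp add: frac_eq_eq)
qed

lemma sigma_Fract_one: "sigma t (Fract a 1) = sigma_poly t a"
  by (simp add: sigma_Fract)

lemma sigma_add: "sigma t (x + y) = sigma t x + sigma t y"
  by (cases x; cases y)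
    (simp add: sigma_Fract sigma_poly_add sigma_poly_mult sigma_poly_nonzero add_frac_eq)

lemma sigma_mult: "sigma t (x * y) = sigma t x * sigma t y"
  by (cases x; cases y) (simp add: sigma_Fract sigma_poly_mult)

lemma sigma_zero [simp]: "sigma t 0 = 0"
  using sigma_Fract_one[of t 0] by (simp add: fract_collapse)

lemma sigma_sum: "sigma t (sum g A) = (\<Sum>a\<in>A. sigma t (g a))"
  by (induction A rule: infinite_finite_induct) (simp_all add: sigma_add)

lemma sigma_rconst: "sigma t (rconst c) = rconst c"
  by (simp only: rconst_def sigma_Fract_one sigma_poly_mconst)

lemma sigma_rvar: "sigma t (rvar v) = sigma_gen t v"
  by (simp add: rvar_def sigma_Fract_one sigma_poly_mvar)

lemma ratfun_in_sigma_poly: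
  assumes "pvars p \<subseteq> V"
  shows "ratfun_in (V \<union> vshift t ` V) (sigma_poly t p)"
  unfolding sigma_poly_def
proof (intro ratfun_in_sum ratfun_in_mult ratfun_in_rconst ratfun_in_prod ratfun_in_power)
  fix m v assume "m \<in> Poly_Mapping.keys p" "v \<in> Poly_Mapping.keys m"
  then have "v \<in> V" using assms keys_subset_pvars by blast
  then show "ratfun_in (V \<union> vshift t ` V) (sigma_gen t v)"
    unfolding sigma_gen_eq by (intro ratfun_in_divide ratfun_in_rvar) auto
qed

lemma ratfun_in_sigma:
  assumes "ratfun_in V f"
  shows "ratfun_in (V \<union> vshift t ` V) (sigma t f)"
proof -
  obtain a b where "b \<noteq> 0" "f = Fract a b" "pvars a \<subseteq> V" "pvars b \<subseteq> V"
    using assms by (rule ratfun_inE)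
  then show ?thesis
    by (simp add: sigma_Fract ratfun_in_divide ratfun_in_sigma_poly)
qed

section \<open>Pulling log-canonical brackets back along sigma\<close>

lemma sigma_monomial_diff_single:
  assumes "finite V" "Poly_Mapping.keys m \<subseteq> V" "u \<in> V"
  shows "sigma_monomial t (m - Poly_Mapping.single u 1) = sigma_gen t u ^ (Poly_Mapping.lookup m u - 1)
    * (\<Prod>v\<in>V - {u}. sigma_gen t v ^ Poly_Mapping.lookup m v)"
proof -
  have "Poly_Mapping.keys (m - Poly_Mapping.single u 1) \<subseteq> V"
    using assms(2) by (auto simp: in_keys_iff lookup_minus lookup_single when_def split: if_splits)
  then have "sigma_monomial t (m - Poly_Mapping.single u 1) =
      sigma_gen t u ^ (Poly_Mapping.lookup m u - 1) *
      (\<Prod>v\<in>V - {u}. sigma_gen t v ^ Poly_Mapping.lookup (m - Poly_Mapping.single u 1) v)"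
    using assms by (simp add: sigma_monomial_eq_prod[of V] prod.remove lookup_minus lookup_single)
  also have "(\<Prod>v\<in>V - {u}. sigma_gen t v ^ Poly_Mapping.lookup (m - Poly_Mapping.single u 1) v) =
      (\<Prod>v\<in>V - {u}. sigma_gen t v ^ Poly_Mapping.lookup m v)"
    by (intro prod.cong refl) (auto simp: lookup_minus lookup_single)
  finally show ?thesis .
qed

lemma rpderiv_sigma_monomial:
  assumes "finite V" "Poly_Mapping.keys m \<subseteq> V"
  shows "rpderiv w (sigma_monomial t m) = (\<Sum>u\<in>V. of_nat (Poly_Mapping.lookup m u) *
    sigma_monomial t (m - Poly_Mapping.single u 1) * rpderiv w (sigma_gen t u))"
  unfolding sigma_monomial_eq_prod[OF assms] rpderiv_prod
proof (intro sum.cong refl)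
  fix u assume "u \<in> V"
  show "rpderiv w (sigma_gen t u ^ Poly_Mapping.lookup m u) *
      (\<Prod>v\<in>V - {u}. sigma_gen t v ^ Poly_Mapping.lookup m v) =
    of_nat (Poly_Mapping.lookup m u) * sigma_monomial t (m - Poly_Mapping.single u 1) *
      rpderiv w (sigma_gen t u)"
    unfolding sigma_monomial_diff_single[OF assms \<open>u \<in> V\<close>] by (simp add: rpderiv_power mult_ac)
qed

lemma rpderiv_sigma_poly:
  assumes "finite V" "pvars p \<subseteq> V"
  shows "rpderiv w (sigma_poly t p) =
    (\<Sum>u\<in>V. sigma_poly t (mpderiv u p) * rpderiv w (sigma_gen t u))"
proof -
  have "rpderiv w (sigma_poly t p) = (\<Sum>m\<in>Poly_Mapping.keys p.
      rconst (Poly_Mapping.lookup p m) * rpderiv w (sigma_monomial t m))"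
    by (simp add: sigma_poly_eq_sum[of "Poly_Mapping.keys p"] rpderiv_sum rpderiv_mult rpderiv_rconst)
  also have "\<dots> = (\<Sum>m\<in>Poly_Mapping.keys p. \<Sum>u\<in>V. rconst (Poly_Mapping.lookup p m) *
      of_nat (Poly_Mapping.lookup m u) * sigma_monomial t (m - Poly_Mapping.single u 1) *
      rpderiv w (sigma_gen t u))"
  proof (intro sum.cong refl)
    fix m assume "m \<in> Poly_Mapping.keys p"
    then have "Poly_Mapping.keys m \<subseteq> V" using assms(2) keys_subset_pvars by blast
    then show "rconst (Poly_Mapping.lookup p m) * rpderiv w (sigma_monomial t m) =
      (\<Sum>u\<in>V. rconst (Poly_Mapping.lookup p m) * of_nat (Poly_Mapping.lookup m u) *
        sigma_monomial t (m - Poly_Mapping.single u 1) * rpderiv w (sigma_gen t u))"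
      by (simp add: rpderiv_sigma_monomial[OF assms(1)] sum_distrib_left mult_ac)
  qed
  also have "\<dots> = (\<Sum>u\<in>V. sigma_poly t (mpderiv u p) * rpderiv w (sigma_gen t u))"
    by (subst sum.swap) (simp add: mpderiv_def sigma_poly_sum sigma_poly_single rconst_mult
        rconst_of_nat sum_distrib_right)
  finally show ?thesis .
qed

lemma rpderiv_sigma:
  assumes "finite V" "ratfun_in V f"
  shows "rpderiv w (sigma t f) = (\<Sum>u\<in>V. sigma t (rpderiv u f) * rpderiv w (sigma_gen t u))"
proof -
  obtain a b where ab: "b \<noteq> 0" "f = Fract a b" "pvars a \<subseteq> V" "pvars b \<subseteq> V"
    using assms(2) by (rule ratfun_inE)
  have "sigma_poly t b \<noteq> 0" using ab(1) by (rule sigma_poly_nonzero)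
  then show ?thesis
    using ab rpderiv_sigma_poly[OF assms(1)]
    by (simp add: sigma_Fract rpderiv_Fract rpderiv_divide sigma_poly_diff sigma_poly_mult
        sum_divide_distrib[symmetric] sum_subtractf sum_distrib_left sum_distrib_right field_simps)
qed

lemma rvar_mult_rpderiv_sigma_gen:
  "rvar w * rpderiv w (sigma_gen t u) = sigma_gen t u * (of_bool (w = u) - of_bool (w = vshift t u))"
  using rvar_nonzero[of "vshift t u"] vshift_neq[of t u]
  by (auto simp: sigma_gen_eq rpderiv_divide rpderiv_rvar field_simps power2_eq_square)

lemma rvar_mult_rpderiv_sigma:
  assumes "finite V" "ratfun_in V f"
  shows "rvar w * rpderiv w (sigma t f) =
    (\<Sum>u\<in>V. sigma t (rpderiv u f) * sigma_gen t u * (of_bool (w = u) - of_bool (w = vshift t u)))"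
  unfolding rpderiv_sigma[OF assms] sum_distrib_left
  by (intro sum.cong refl)
    (simp add: mult.left_commute[of "rvar w"] rvar_mult_rpderiv_sigma_gen mult.assoc)

lemma sum_mult_delta_diff:
  fixes F :: "'a \<Rightarrow> 'b::comm_ring_1"
  assumes "finite W" "a \<in> W" "b \<in> W" "a \<noteq> b"
  shows "(\<Sum>w\<in>W. F w * (of_bool (w = a) - of_bool (w = b))) = F a - F b"
  using assms by (simp add: right_diff_distrib sum_subtractf if_distrib cong: if_cong)

lemma sum_sum_mult_delta_diff:
  fixes c :: "'a \<Rightarrow> 'a \<Rightarrow> 'b::comm_ring_1"
  assumes "finite W" "a \<in> W" "a' \<in> W" "a \<noteq> a'" "b \<in> W" "b' \<in> W" "b \<noteq> b'"
  shows "(\<Sum>w\<in>W. \<Sum>z\<in>W. c w z * (of_bool (w = a) - of_bool (w = a'))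
      * (of_bool (z = b) - of_bool (z = b'))) = c a b - c a b' - c a' b + c a' b'"
proof -
  have "(\<Sum>w\<in>W. \<Sum>z\<in>W. c w z * (of_bool (w = a) - of_bool (w = a'))
      * (of_bool (z = b) - of_bool (z = b')))
      = (\<Sum>w\<in>W. (c w b - c w b') * (of_bool (w = a) - of_bool (w = a')))"
    using assms(1,5-7) by (intro sum.cong refl, subst sum_mult_delta_diff) (simp_all add: algebra_simps)
  also have "\<dots> = c a b - c a b' - c a' b + c a' b'"
    using assms(1-4) by (simp add: sum_mult_delta_diff)
  finally show ?thesis .
qed

lemma mult_sum_mult_sum:
  "(c::'a::comm_semiring_0) * (\<Sum>u\<in>A. f u) * (\<Sum>v\<in>B. g v) = (\<Sum>u\<in>A. \<Sum>v\<in>B. c * f u * g v)"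
proof -
  have "c * (\<Sum>u\<in>A. f u) * (\<Sum>v\<in>B. g v) = c * (\<Sum>u\<in>A. \<Sum>v\<in>B. f u * g v)"
    by (simp only: mult.assoc sum_product)
  then show ?thesis by (simp add: sum_distrib_left mult.assoc)
qed

lemma sum_swap_outer_inner:
  "(\<Sum>w\<in>W. \<Sum>z\<in>Z. \<Sum>u\<in>U. \<Sum>v\<in>V. F w z u v) = (\<Sum>u\<in>U. \<Sum>v\<in>V. \<Sum>w\<in>W. \<Sum>z\<in>Z. F w z u v)"
proof -
  have "(\<Sum>w\<in>W. \<Sum>z\<in>Z. \<Sum>u\<in>U. \<Sum>v\<in>V. F w z u v) = (\<Sum>w\<in>W. \<Sum>u\<in>U. \<Sum>z\<in>Z. \<Sum>v\<in>V. F w z u v)"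
    by (rule sum.cong[OF refl], rule sum.swap)
  also have "\<dots> = (\<Sum>u\<in>U. \<Sum>w\<in>W. \<Sum>z\<in>Z. \<Sum>v\<in>V. F w z u v)"
    by (rule sum.swap)
  also have "\<dots> = (\<Sum>u\<in>U. \<Sum>v\<in>V. \<Sum>w\<in>W. \<Sum>z\<in>Z. F w z u v)"
    by (intro sum.cong refl) (simp add: sum.swap[of _ Z] flip: sum.swap[of _ W])
  finally show ?thesis .
qed

definition sigma_pullback ::
  "cartan_type \<Rightarrow> (vert \<Rightarrow> vert \<Rightarrow> 'a::ab_group_add) \<Rightarrow> vert \<Rightarrow> vert \<Rightarrow> 'a" where
  "sigma_pullback t \<omega> u v =
    \<omega> u v - \<omega> u (vshift t v) - \<omega> (vshift t u) v + \<omega> (vshift t u) (vshift t v)"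

lemma sigma_logcan_bracket:
  "sigma t (logcan_bracket (sigma_pullback t \<omega>) f g) = logcan_bracket \<omega> (sigma t f) (sigma t g)"
proof -
  obtain V where V: "finite V" "ratfun_in V f" "ratfun_in V g"
    using ratfun_in_finite_subset[OF ratfun_in_UNIV ratfun_in_UNIV] by metis
  define W where "W = V \<union> vshift t ` V"
  have W: "finite W" "ratfun_in W (sigma t f)" "ratfun_in W (sigma t g)"
    using V ratfun_in_sigma[OF V(2)] ratfun_in_sigma[OF V(3)] by (simp_all add: W_def)
  let ?F = "\<lambda>u. sigma t (rpderiv u f) * sigma_gen t u"
  let ?G = "\<lambda>v. sigma t (rpderiv v g) * sigma_gen t v"
  let ?\<delta> = "\<lambda>w u. of_bool (w = u) - of_bool (w = vshift t u) :: ratfun"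
  have "logcan_bracket \<omega> (sigma t f) (sigma t g) = (\<Sum>w\<in>W. \<Sum>z\<in>W.
      rconst (\<omega> w z) * (rvar w * rpderiv w (sigma t f)) * (rvar z * rpderiv z (sigma t g)))"
    by (simp add: logcan_bracket_eq_sum[OF W] logcan_sum_def mult_ac)
  also have "\<dots> = (\<Sum>w\<in>W. \<Sum>z\<in>W. \<Sum>u\<in>V. \<Sum>v\<in>V.
      rconst (\<omega> w z) * (?F u * ?\<delta> w u) * (?G v * ?\<delta> z v))"
    by (simp only: rvar_mult_rpderiv_sigma[OF V(1,2)] rvar_mult_rpderiv_sigma[OF V(1,3)]
        mult_sum_mult_sum)
  also have "\<dots> = (\<Sum>u\<in>V. \<Sum>v\<in>V. ?F u * ?G v *
      (\<Sum>w\<in>W. \<Sum>z\<in>W. rconst (\<omega> w z) * ?\<delta> w u * ?\<delta> z v))"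
    by (subst sum_swap_outer_inner) (simp add: sum_distrib_left mult_ac)
  also have "\<dots> = (\<Sum>u\<in>V. \<Sum>v\<in>V. ?F u * ?G v * rconst (sigma_pullback t \<omega> u v))"
    using \<open>finite W\<close>
    by (intro sum.cong refl) (simp add: sum_sum_mult_delta_diff W_def vshift_neq[symmetric]
        sigma_pullback_def rconst_add rconst_diff)
  also have "\<dots> = sigma t (logcan_bracket (sigma_pullback t \<omega>) f g)"
    by (simp add: logcan_bracket_eq_sum[OF V] logcan_sum_def sigma_sum sigma_mult sigma_rconst
        sigma_rvar mult_ac)
  finally show ?thesis by (rule sym)
qed

section \<open>The quiver and the s-bracket in integer coordinates\<close>

lemma dmin_eq:
  assumes "valid_type t"
  shows "dmin t = (case t of TB l \<Rightarrow> 1/2 | TF4 \<Rightarrow> 1/2 | _ \<Rightarrow> 1)"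
  unfolding dmin_def Sset_def
proof (rule Min_eqI)
  show "finite (dsym t ` {1..rank t})" by simp
  show "y \<ge> (case t of TB l \<Rightarrow> 1/2 | TF4 \<Rightarrow> 1/2 | _ \<Rightarrow> 1)" if "y \<in> dsym t ` {1..rank t}" for y
    using that by (cases t) (auto simp: dsym_def)
  show "(case t of TB l \<Rightarrow> 1/2 | TF4 \<Rightarrow> 1/2 | _ \<Rightarrow> 1) \<in> dsym t ` {1..rank t}"
    using assms by (cases t) (auto simp: dsym_def rank_def valid_type_def image_iff
        intro: bexI[of _ 1] bexI[of _ 3] bexI[of _ "rank t"])
qed

lemma dmin_pos: "valid_type t \<Longrightarrow> dmin t > 0"
  by (cases t) (simp_all add: dmin_eq)

lemma dsym_eq_multiple_dmin:
  assumes "valid_type t"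
  obtains a :: int where "a \<in> {1, 2, 3}" "dsym t i = of_int a * dmin t"
proof -
  have "dsym t i / dmin t \<in> {1, 2, 3}"
    using assms by (cases t) (simp_all add: dmin_eq dsym_def)
  then consider "dsym t i = of_int 1 * dmin t" | "dsym t i = of_int 2 * dmin t"
    | "dsym t i = of_int 3 * dmin t"
    using dmin_pos[OF assms] by (auto simp: field_simps)
  then show thesis
    by cases (rule that[of 1] that[of 2] that[of 3]; simp)+
qed

lemma adjacent_dsym:
  assumes "valid_type t" "adjacent t i j"
  shows "dsym t i = dsym t j \<or> min (dsym t i) (dsym t j) = dmin t"
  using assms
  by (cases t) (auto simp: dmin_eq dsym_def adjacent_def dynkin_edge_def Sset_def rank_def)

lemma adjacent_sym: "adjacent t i j = adjacent t j i"
  by (auto simp: adjacent_def)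

lemma Bsym_neq_0_iff: "i \<noteq> j \<Longrightarrow> Bsym t i j \<noteq> 0 \<longleftrightarrow> adjacent t i j"
  using dsym_pos[of t i] dsym_pos[of t j] by (auto simp: Bsym_def cartanC_def max_def)

lemma valid_vert_vshift:
  assumes "valid_type t" "valid_vert t v"
  shows "valid_vert t (vshift t v)"
proof -
  obtain a :: int where "dsym t (fst v) = of_int a * dmin t"
    using dsym_eq_multiple_dmin[OF assms(1)] by metis
  moreover obtain x :: int where "snd v = of_int x * dmin t"
    using assms(2) by (auto simp: valid_vert_def in_mult_def)
  ultimately have "snd (vshift t v) = of_int (x + a) * dmin t"
    by (simp add: vshift_def algebra_simps)
  then show ?thesis
    using assms(2) unfolding valid_vert_def in_mult_def
    by (auto simp: vshift_def intro: exI[of _ "x + a"])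
qed

lemma arrows_TB_uniform:
  assumes "l \<ge> 2" "valid_vert (TB l) (i, n)" "valid_vert (TB l) (j, m)"
  shows "arrows (TB l) (i, n) (j, m) = of_bool (i = j \<and> m = n + dsym (TB l) i)
    + of_bool (adjacent (TB l) i j \<and> j < i \<and> m = n - max 0 (dsym (TB l) j - dsym (TB l) i))
    + of_bool (adjacent (TB l) i j \<and> i < j \<and> n = m + dsym (TB l) j)"
proof -
  have ij: "i \<in> {1..l}" "j \<in> {1..l}"
    using assms by (simp_all add: valid_vert_def Sset_def rank_def)
  have adj: "adjacent (TB l) i j \<longleftrightarrow> j = i + 1 \<or> i = j + 1"
    using ij by (auto simp: adjacent_def dynkin_edge_def Sset_def rank_def)
  have arr: "arrows (TB l) (i, n) (j, m) = of_bool (i = j \<and> i \<le> l - 1 \<and> m = n + 1)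
        + of_bool (2 \<le> i \<and> i \<le> l - 1 \<and> j = i - 1 \<and> m = n)
        + of_bool (2 \<le> j \<and> j \<le> l - 1 \<and> i = j - 1 \<and> n = m + 1)
        + of_bool (i = l \<and> j = l \<and> m = n + 1/2)
        + of_bool (i = l \<and> j = l - 1 \<and> m = n - 1/2)
        + of_bool (i = l - 1 \<and> j = l \<and> n = m + 1/2)"
    using assms(2,3) by (simp add: arrows_def Let_def)
  consider "i = j" "i = l" | "i = j" "i < l" | "j = i + 1" "j = l" | "j = i + 1" "j < l"
    | "i = j + 1" "i = l" | "i = j + 1" "i < l" | "\<not> adjacent (TB l) i j" "i \<noteq> j"
    using ij adj by (auto simp: order.order_iff_strict)
  then show ?thesis
    unfolding arr adj using ij assms(1) by cases (auto simp: dsym_def)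
qed

lemma arrows_TC_uniform:
  assumes "l \<ge> 2" "valid_vert (TC l) (i, n)" "valid_vert (TC l) (j, m)"
  shows "arrows (TC l) (i, n) (j, m) = of_bool (i = j \<and> m = n + dsym (TC l) i)
    + of_bool (adjacent (TC l) i j \<and> j < i \<and> m = n - max 0 (dsym (TC l) j - dsym (TC l) i))
    + of_bool (adjacent (TC l) i j \<and> i < j \<and> n = m + dsym (TC l) j)"
proof -
  have ij: "i \<in> {1..l}" "j \<in> {1..l}"
    using assms by (simp_all add: valid_vert_def Sset_def rank_def)
  have adj: "adjacent (TC l) i j \<longleftrightarrow> j = i + 1 \<or> i = j + 1"
    using ij by (auto simp: adjacent_def dynkin_edge_def Sset_def rank_def)
  have arr: "arrows (TC l) (i, n) (j, m) = of_bool (i = j \<and> i \<le> l - 1 \<and> m = n + 1)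
        + of_bool (2 \<le> i \<and> i \<le> l - 1 \<and> j = i - 1 \<and> m = n)
        + of_bool (2 \<le> j \<and> j \<le> l - 1 \<and> i = j - 1 \<and> n = m + 1)
        + of_bool (i = l \<and> j = l \<and> m = n + 2)
        + of_bool (i = l \<and> j = l - 1 \<and> m = n)
        + of_bool (i = l - 1 \<and> j = l \<and> n = m + 2)"
    using assms(2,3) by (simp add: arrows_def Let_def)
  consider "i = j" "i = l" | "i = j" "i < l" | "j = i + 1" "j = l" | "j = i + 1" "j < l"
    | "i = j + 1" "i = l" | "i = j + 1" "i < l" | "\<not> adjacent (TC l) i j" "i \<noteq> j"
    using ij adj by (auto simp: order.order_iff_strict)
  then show ?thesis
    unfolding arr adj using ij assms(1) by cases (auto simp: dsym_def)
qed

lemma arrows_TF4_uniform: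
  assumes "valid_vert TF4 (i, n)" "valid_vert TF4 (j, m)"
  shows "arrows TF4 (i, n) (j, m) = of_bool (i = j \<and> m = n + dsym TF4 i)
    + of_bool (adjacent TF4 i j \<and> j < i \<and> m = n - max 0 (dsym TF4 j - dsym TF4 i))
    + of_bool (adjacent TF4 i j \<and> i < j \<and> n = m + dsym TF4 j)"
proof -
  have "i \<in> {1, 2, 3, 4}" "j \<in> {1, 2, 3, 4}"
    using assms by (auto simp: valid_vert_def Sset_def rank_def)
  then show ?thesis
    using assms by (auto simp: arrows_def adjacent_def dynkin_edge_def Sset_def rank_def dsym_def)
qed

lemma arrows_TG2_uniform:
  assumes "valid_vert TG2 (i, n)" "valid_vert TG2 (j, m)"
  shows "arrows TG2 (i, n) (j, m) = of_bool (i = j \<and> m = n + dsym TG2 i)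
    + of_bool (adjacent TG2 i j \<and> j < i \<and> m = n - max 0 (dsym TG2 j - dsym TG2 i))
    + of_bool (adjacent TG2 i j \<and> i < j \<and> n = m + dsym TG2 j)"
proof -
  have "i \<in> {1, 2}" "j \<in> {1, 2}"
    using assms by (auto simp: valid_vert_def Sset_def rank_def)
  then show ?thesis
    using assms by (auto simp: arrows_def adjacent_def dynkin_edge_def Sset_def rank_def dsym_def)
qed

lemma arrows_uniform:
  assumes "valid_type t" "valid_vert t (i, n)" "valid_vert t (j, m)"
  shows "arrows t (i, n) (j, m) = of_bool (i = j \<and> m = n + dsym t i)
    + of_bool (adjacent t i j \<and> j < i \<and> m = n - max 0 (dsym t j - dsym t i))
    + of_bool (adjacent t i j \<and> i < j \<and> n = m + dsym t j)"
  using assms arrows_TB_uniform[of _ i n j m] arrows_TC_uniform[of _ i n j m]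
    arrows_TF4_uniform[of i n j m] arrows_TG2_uniform[of i n j m]
  by (cases t) (simp_all add: valid_type_def arrows_def dsym_def)

(* s_omega and arrows between (i, n) and (j, n + k d), where d = dmin t, written in terms of
   r = sgn (j - i), the adjacency of i and j, a = d_i / d and b = d_j / d. *)
definition omega_int :: "int \<Rightarrow> bool \<Rightarrow> int \<Rightarrow> int \<Rightarrow> int \<Rightarrow> rat" where
  "omega_int r adj a b k = (if r = 0 then of_bool (a dvd k) * of_int (sgn k)
     else if adj then - of_bool (min a b dvd k) * of_int (if k = 0 then r else sgn k) / 2
     else 0)"

definition arrows_int :: "int \<Rightarrow> bool \<Rightarrow> int \<Rightarrow> int \<Rightarrow> int \<Rightarrow> int" where
  "arrows_int r adj a b k = of_bool (r = 0 \<and> k = a)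
     + of_bool (adj \<and> r = -1 \<and> k = - max 0 (b - a)) + of_bool (adj \<and> r = 1 \<and> k = - b)"

lemma omega_int_mixed_diff_small:
  assumes "r \<in> {-1, 0, 1}" "a \<in> {1, 2, 3}" "b \<in> {1, 2, 3}"
    and "r = 0 \<Longrightarrow> a = b" "adj \<Longrightarrow> a = b \<or> min a b = 1" "k \<in> {-3..3}"
  shows "omega_int r adj a b k - omega_int r adj a b (k + b) - omega_int r adj a b (k - a)
      + omega_int r adj a b (k + b - a) = of_int (arrows_int r adj a b k - arrows_int (- r) adj b a (- k))"
proof -
  have "k \<in> {-3, -2, -1, 0, 1, 2, 3}" using assms(6) by auto
  with assms(1-5) show ?thesis
    by (cases adj) (elim insertE emptyE; simp add: omega_int_def arrows_int_def)+
qed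

lemma omega_int_same_sign:
  assumes "0 < x * y" "p dvd (x - y)"
    and "r = 0 \<Longrightarrow> p = a" "r \<noteq> 0 \<Longrightarrow> adj \<Longrightarrow> p = min a b"
  shows "omega_int r adj a b x = omega_int r adj a b y"
proof -
  have "sgn x = sgn y" "x \<noteq> 0" "y \<noteq> 0"
    using assms(1) by (auto simp: zero_less_mult_iff)
  moreover have "p dvd x \<longleftrightarrow> p dvd y"
    using assms(2) by (metis diff_add_cancel dvd_add_left_iff add.commute)
  ultimately show ?thesis
    using assms(3,4) by (auto simp: omega_int_def)
qed

lemma omega_int_mixed_diff:
  assumes "r \<in> {-1, 0, 1}" "a \<in> {1, 2, 3}" "b \<in> {1, 2, 3}"
    and "r = 0 \<Longrightarrow> a = b" "adj \<Longrightarrow> a = b \<or> min a b = 1"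
  shows "omega_int r adj a b k - omega_int r adj a b (k + b) - omega_int r adj a b (k - a)
      + omega_int r adj a b (k + b - a) = of_int (arrows_int r adj a b k - arrows_int (- r) adj b a (- k))"
proof -
  consider "k \<in> {-3..3}" | "r \<noteq> 0" "\<not> adj" | "k \<notin> {-3..3}" "r = 0 \<or> adj" by blast
  then show ?thesis
  proof cases
    case 1
    with assms show ?thesis by (rule omega_int_mixed_diff_small)
  next
    case 2
    then show ?thesis by (simp add: omega_int_def arrows_int_def)
  next
    case 3
    \<comment> \<open>the four offsets have the sign of \<open>k\<close> and agree modulo the period \<open>p\<close>\<close>
    define p where "p = (if r = 0 then a else min a b)"
    have p: "r = 0 \<Longrightarrow> p = a" "r \<noteq> 0 \<Longrightarrow> adj \<Longrightarrow> p = min a b"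
      by (simp_all add: p_def)
    have "p dvd a" "p dvd b"
      using 3(2) assms(2-5) by (auto simp: p_def)
    moreover have "0 < k * (k + b)" "0 < k * (k - a)" "0 < k * (k + b - a)"
      using 3(1) assms(2,3) by (auto simp: zero_less_mult_iff)
    ultimately have "omega_int r adj a b k = omega_int r adj a b (k + b)"
      "omega_int r adj a b k = omega_int r adj a b (k - a)"
      "omega_int r adj a b k = omega_int r adj a b (k + b - a)"
      by (auto intro!: omega_int_same_sign[OF _ _ p])
    moreover have "arrows_int r adj a b k = 0" "arrows_int (- r) adj b a (- k) = 0"
      using 3(1) assms(2,3) by (auto simp: arrows_int_def)
    ultimately show ?thesis by simp
  qed
qed

lemma in_mult_of_int_mult:
  assumes "(q::rat) \<noteq> 0"
  shows "in_mult (of_int k * q) (of_int a * q) \<longleftrightarrow> a dvd k"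
proof -
  have "of_int k * q = of_int z * (of_int a * q) \<longleftrightarrow> k = a * z" for z
  proof -
    have "of_int z * (of_int a * q) = of_int (a * z) * q" by (simp add: mult_ac)
    then show ?thesis using assms by (metis mult_cancel_right of_int_eq_iff)
  qed
  then show ?thesis by (simp add: in_mult_def dvd_def)
qed

lemma eq_add_of_int_mult_iff:
  fixes m n q :: rat
  assumes "m - n = of_int k * q" "q \<noteq> 0"
  shows "m = n + of_int c * q \<longleftrightarrow> k = c"
proof -
  have "m = n + of_int c * q \<longleftrightarrow> of_int k * q = of_int c * q"
    using assms(1) by (auto simp: algebra_simps)
  also have "\<dots> \<longleftrightarrow> k = c"
    using assms(2) by simp
  finally show ?thesis .
qed

lemma s_omega_eq_omega_int:
  assumes "valid_type t" "valid_vert t (i, n)" "valid_vert t (j, m)"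
    and "dsym t i = of_int a * dmin t" "dsym t j = of_int b * dmin t" "m - n = of_int k * dmin t"
  shows "s_omega t (i, n) (j, m) = omega_int (sgn (int j - int i)) (adjacent t i j) a b k"
proof -
  have dm: "dmin t > 0" using assms(1) by (rule dmin_pos)
  have nm: "n - m = of_int (- k) * dmin t" using assms(6) by simp
  have "n < m \<longleftrightarrow> 0 < of_int k * dmin t" "m < n \<longleftrightarrow> of_int k * dmin t < 0"
    using assms(6) by linarith+
  then have lt: "n < m \<longleftrightarrow> 0 < k" "m < n \<longleftrightarrow> k < 0"
    using dm by (simp_all add: zero_less_mult_iff mult_less_0_iff)
  have "min (dsym t i) (dsym t j) = of_int (min a b) * dmin t"
    "min (dsym t j) (dsym t i) = of_int (min a b) * dmin t"
    using dm by (simp_all add: assms(4,5) min_def)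
  then have dvd: "in_mult (m - n) (dsym t i) \<longleftrightarrow> a dvd k"
    "in_mult (n - m) (dsym t j) \<longleftrightarrow> b dvd k"
    "in_mult (m - n) (min (dsym t i) (dsym t j)) \<longleftrightarrow> min a b dvd k"
    "in_mult (n - m) (min (dsym t j) (dsym t i)) \<longleftrightarrow> min a b dvd k"
    using dm by (simp_all only: assms(4-6) nm in_mult_of_int_mult dvd_minus_iff)
  have "i = j \<Longrightarrow> a = b" using assms(4,5) dm by simp
  then show ?thesis
    using assms(2,3) lt dvd Bsym_neq_0_iff[of i j t] Bsym_neq_0_iff[of j i t]
    by (auto simp: s_omega_def s_omega_lt_def omega_int_def Let_def adjacent_sym[of t j i] sgn_if)
qed

lemma arrows_eq_arrows_int:
  assumes "valid_type t" "valid_vert t (i, n)" "valid_vert t (j, m)"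
    and "dsym t i = of_int a * dmin t" "dsym t j = of_int b * dmin t" "m - n = of_int k * dmin t"
  shows "arrows t (i, n) (j, m) = arrows_int (sgn (int j - int i)) (adjacent t i j) a b k"
proof -
  have dm: "dmin t \<noteq> 0" using dmin_pos[OF assms(1)] by simp
  note shift_iff = eq_add_of_int_mult_iff[OF assms(6) dm]
  have "n - max 0 (dsym t j - dsym t i) = n + of_int (- max 0 (b - a)) * dmin t"
    using dmin_pos[OF assms(1)] by (simp add: assms(4,5) max_def algebra_simps)
  then have "m = n - max 0 (dsym t j - dsym t i) \<longleftrightarrow> k = - max 0 (b - a)"
    by (simp only: shift_iff)
  moreover have "n = m + dsym t j \<longleftrightarrow> m = n + of_int (- b) * dmin t"
    using assms(5) by auto
  then have "n = m + dsym t j \<longleftrightarrow> k = - b"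
    by (simp only: shift_iff)
  moreover have "m = n + dsym t i \<longleftrightarrow> k = a"
    by (simp only: assms(4) shift_iff)
  ultimately show ?thesis
    unfolding arrows_uniform[OF assms(1-3)] by (simp add: arrows_int_def sgn_if)
qed

lemma sigma_pullback_s_omega_eq_omega_int:
  assumes "valid_type t" "valid_vert t (i, n)" "valid_vert t (j, m)"
    and "dsym t i = of_int a * dmin t" "dsym t j = of_int b * dmin t" "m - n = of_int k * dmin t"
  defines "\<omega> \<equiv> omega_int (sgn (int j - int i)) (adjacent t i j) a b"
  shows "sigma_pullback t (s_omega t) (i, n) (j, m) = \<omega> k - \<omega> (k + b) - \<omega> (k - a) + \<omega> (k + b - a)"
proof -
  have "valid_vert t (i, n + dsym t i)" "valid_vert t (j, m + dsym t j)"
    using valid_vert_vshift[OF assms(1)] assms(2,3) by (force simp: vshift_def)+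
  moreover have "m + dsym t j - n = of_int (k + b) * dmin t"
    "m - (n + dsym t i) = of_int (k - a) * dmin t"
    "m + dsym t j - (n + dsym t i) = of_int (k + b - a) * dmin t"
    using assms(4-6) by (simp_all add: algebra_simps)
  ultimately show ?thesis
    unfolding sigma_pullback_def vshift_def fst_conv snd_conv \<omega>_def
    using assms(2,3,6) by (simp only: s_omega_eq_omega_int[OF assms(1) _ _ assms(4,5)])
qed

lemma exch_eq_arrows_int:
  assumes "valid_type t" "valid_vert t (i, n)" "valid_vert t (j, m)"
    and "dsym t i = of_int a * dmin t" "dsym t j = of_int b * dmin t" "m - n = of_int k * dmin t"
  shows "exch t (i, n) (j, m) = arrows_int (sgn (int j - int i)) (adjacent t i j) a b k
    - arrows_int (- sgn (int j - int i)) (adjacent t i j) b a (- k)"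
proof -
  have "n - m = of_int (- k) * dmin t" using assms(6) by simp
  then have "arrows t (j, m) (i, n) = arrows_int (sgn (int i - int j)) (adjacent t j i) b a (- k)"
    using assms by (intro arrows_eq_arrows_int) simp_all
  then show ?thesis
    using arrows_eq_arrows_int[OF assms]
    by (simp add: exch_def adjacent_sym[of t j i] sgn_if)
qed

lemma exch_eq_sigma_pullback:
  assumes "valid_type t" "valid_vert t u" "valid_vert t v"
  shows "of_int (exch t u v) = sigma_pullback t (s_omega t) u v"
proof -
  obtain i n j m where uv: "u = (i, n)" "v = (j, m)" by fastforce
  obtain a b :: int where ab: "a \<in> {1, 2, 3}" "b \<in> {1, 2, 3}"
    and d: "dsym t i = of_int a * dmin t" "dsym t j = of_int b * dmin t"
    using dsym_eq_multiple_dmin[OF assms(1)] by metis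
  obtain x y :: int where "n = of_int x * dmin t" "m = of_int y * dmin t"
    using assms(2,3) uv by (auto simp: valid_vert_def in_mult_def)
  then have k: "m - n = of_int (y - x) * dmin t" by (simp add: algebra_simps)
  have dm: "dmin t > 0" using assms(1) by (rule dmin_pos)
  have "adjacent t i j \<Longrightarrow> a = b \<or> min a b = 1"
    using adjacent_dsym[OF assms(1), of i j] dm by (auto simp: d min_def split: if_splits)
  moreover have "a = b" if "sgn (int j - int i) = 0"
    using that d dm by (simp add: sgn_0_0)
  moreover have "sgn (int j - int i) \<in> {-1, 0, 1}" by (simp add: sgn_if)
  ultimately show ?thesis
    using ab assms(2,3) uv
    by (simp add: sigma_pullback_s_omega_eq_omega_int[OF assms(1) _ _ d k]
        exch_eq_arrows_int[OF assms(1) _ _ d k] omega_int_mixed_diff)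
qed

theorem proposition5p1:
  fixes t :: cartan_type and f g :: ratfun
  assumes "valid_type t"
    and "ratfun_in {v. valid_vert t v} f"
    and "ratfun_in {v. valid_vert t v} g"
  shows "sigma t (X_bracket t f g) = s_bracket t (sigma t f) (sigma t g)"
proof -
  have "X_bracket t f g = logcan_bracket (sigma_pullback t (\<lambda>u v. of_rat (s_omega t u v))) f g"
    unfolding X_bracket_def
  proof (rule logcan_bracket_cong[OF assms(2,3)])
    fix u v assume "u \<in> {v. valid_vert t v}" "v \<in> {v. valid_vert t v}"
    then have "of_rat (of_int (exch t u v)) = of_rat (sigma_pullback t (s_omega t) u v)"
      using exch_eq_sigma_pullback[OF assms(1)] by simp
    then show "of_int (exch t u v) = sigma_pullback t (\<lambda>u v. of_rat (s_omega t u v)) u v"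
      by (simp add: sigma_pullback_def of_rat_add of_rat_diff)
  qed
  then show ?thesis
    by (simp add: s_bracket_def sigma_logcan_bracket)
qed

end
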